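(* Let $h_1,\dots,h_{m_1},g_1,\dots,g_{m_2}\in\mathbb{R}[X]$ with every $\deg g_j$ even, and let $U=\{x\in\mathbb{R}^n:h_i(x)=0\ (i=1,\dots,m_1),\ g_j(x)\ge0\ (j=1,\dots,m_2)\}$. Define $\tilde U^{o}=\{\tilde x=(x_0,x)\in\mathbb{R}^{n+1}:\tilde h_i(\tilde x)=0,\ \tilde g_j(\tilde x)\ge0,\ x_0>0\}$ and $\tilde U^{c}$ the same set with $x_0\ge0$ in place of $x_0>0$. Suppose $U$ is not compact. If $\mathrm{conv}(\overline{\tilde U^{o}})$ is closed and pointed, then $U$ is not closed at $\infty$, i.e. $\overline{\tilde U^{o}}\neq\tilde U^{c}$.
   Context: $X=(X_1,\dots,X_n)$, $\tilde X=(X_0,X)$. For $f\in\mathbb{R}[X]$ of degree $d$, its homogenization is $\tilde f(\tilde X)=X_0^df(X/X_0)$. A closed convex cone $K$ is pointed if $K\cap(-K)=\{0\}$. $U$ is closed at $\infty$ if $\overline{\tilde U^{o}}=\tilde U^{c}$. Overline denotes closure, $\mathrm{conv}$ convex hull. *)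

theory Defs
  imports "HOL-Analysis.Analysis" "HOL-Library.Poly_Mapping"
begin

text \<open>Real polynomials in the variables X_i, i ranging over the finite index type 'n
  (so R[X] with n = CARD('n) variables): finitely supported maps from monomials
  (exponent vectors 'n =>0 nat) to real coefficients.\<close>

type_synonym 'n rpoly = "('n \<Rightarrow>\<^sub>0 nat) \<Rightarrow>\<^sub>0 real"

definition mon_deg :: "('n::finite \<Rightarrow>\<^sub>0 nat) \<Rightarrow> nat" where
  "mon_deg a = (\<Sum>i\<in>UNIV. Poly_Mapping.lookup a i)"

definition rpoly_deg :: "'n::finite rpoly \<Rightarrow> nat" where
  "rpoly_deg f = Max (insert 0 (mon_deg ` Poly_Mapping.keys f))"

definition rpoly_eval :: "'n::finite rpoly \<Rightarrow> real^'n \<Rightarrow> real" where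
  "rpoly_eval f x = (\<Sum>a\<in>Poly_Mapping.keys f. Poly_Mapping.lookup f a * (\<Prod>i\<in>UNIV. (x $ i) ^ Poly_Mapping.lookup a i))"

text \<open>Evaluation of the homogenization  X_0^d f(X/X_0), d = deg f, at (x0, x).\<close>
definition hom_eval :: "'n::finite rpoly \<Rightarrow> real \<times> (real^'n) \<Rightarrow> real" where
  "hom_eval f xx = (\<Sum>a\<in>Poly_Mapping.keys f. Poly_Mapping.lookup f a * (fst xx) ^ (rpoly_deg f - mon_deg a)
                      * (\<Prod>i\<in>UNIV. (snd xx $ i) ^ Poly_Mapping.lookup a i))"

definition basic_semialg :: "'n::finite rpoly list \<Rightarrow> 'n rpoly list \<Rightarrow> (real^'n) set" where
  "basic_semialg hs gs = {x. (\<forall>h\<in>set hs. rpoly_eval h x = 0) \<and> (\<forall>g\<in>set gs. rpoly_eval g x \<ge> 0)}"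

definition U_open_tilde :: "'n::finite rpoly list \<Rightarrow> 'n rpoly list \<Rightarrow> (real \<times> (real^'n)) set" where
  "U_open_tilde hs gs = {xx. (\<forall>h\<in>set hs. hom_eval h xx = 0) \<and> (\<forall>g\<in>set gs. hom_eval g xx \<ge> 0) \<and> fst xx > 0}"

definition U_closed_tilde :: "'n::finite rpoly list \<Rightarrow> 'n rpoly list \<Rightarrow> (real \<times> (real^'n)) set" where
  "U_closed_tilde hs gs = {xx. (\<forall>h\<in>set hs. hom_eval h xx = 0) \<and> (\<forall>g\<in>set gs. hom_eval g xx \<ge> 0) \<and> fst xx \<ge> 0}"

definition pointed :: "'a::real_vector set \<Rightarrow> bool" where
  "pointed K \<longleftrightarrow> K \<inter> uminus ` K = {0}"

definition closed_at_infinity :: "'n::finite rpoly list \<Rightarrow> 'n rpoly list \<Rightarrow> bool" where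
  "closed_at_infinity hs gs \<longleftrightarrow> closure (U_open_tilde hs gs) = U_closed_tilde hs gs"

end

theory Submission
  imports Defs
begin

text \<open>If U is unbounded, points (1, x) with x \<in> U and |x| \<rightarrow> \<infinity>, normalised to the unit sphere,
  accumulate at a unit vector l = (0, v) in the closure of the cone over U. Closedness at
  infinity would put l in the closed homogenised set; since all g_j have even degree, that set
  is symmetric on the hyperplane x_0 = 0, so -l lies there as well, and hence both l and -l lie
  in the closure of the open homogenised set. This contradicts pointedness of its convex hull.\<close>

lemma mon_deg_le_rpoly_deg: "a \<in> Poly_Mapping.keys f \<Longrightarrow> mon_deg a \<le> rpoly_deg f"
  unfolding rpoly_deg_def by (simp add: finite_keys)

lemma hom_eval_scaleR:
  fixes f :: "'n::finite rpoly"
  shows "hom_eval f (t *\<^sub>R xx) = t ^ rpoly_deg f * hom_eval f xx"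
proof -
  have "hom_eval f (t *\<^sub>R xx) = (\<Sum>a\<in>Poly_Mapping.keys f. t ^ rpoly_deg f *
          (Poly_Mapping.lookup f a * fst xx ^ (rpoly_deg f - mon_deg a)
            * (\<Prod>i\<in>UNIV. (snd xx $ i) ^ Poly_Mapping.lookup a i)))"
    unfolding hom_eval_def
  proof (rule sum.cong[OF refl])
    fix a assume a: "a \<in> Poly_Mapping.keys f"
    have monomial: "(\<Prod>i\<in>UNIV. (t * snd xx $ i) ^ Poly_Mapping.lookup a i)
        = t ^ mon_deg a * (\<Prod>i\<in>UNIV. (snd xx $ i) ^ Poly_Mapping.lookup a i)"
      by (simp add: power_mult_distrib prod.distrib mon_deg_def power_sum)
    have "t ^ (rpoly_deg f - mon_deg a) * t ^ mon_deg a = t ^ rpoly_deg f"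
      using mon_deg_le_rpoly_deg[OF a] by (simp flip: power_add)
    with monomial show "Poly_Mapping.lookup f a * fst (t *\<^sub>R xx) ^ (rpoly_deg f - mon_deg a)
        * (\<Prod>i\<in>UNIV. snd (t *\<^sub>R xx) $ i ^ Poly_Mapping.lookup a i)
      = t ^ rpoly_deg f * (Poly_Mapping.lookup f a * fst xx ^ (rpoly_deg f - mon_deg a)
        * (\<Prod>i\<in>UNIV. snd xx $ i ^ Poly_Mapping.lookup a i))"
      by (simp add: power_mult_distrib algebra_simps)
  qed
  also have "\<dots> = t ^ rpoly_deg f * hom_eval f xx"
    unfolding hom_eval_def by (simp add: sum_distrib_left)
  finally show ?thesis .
qed

lemma hom_eval_one: "hom_eval f (1, x) = rpoly_eval f x"
  unfolding hom_eval_def rpoly_eval_def by simp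

lemma continuous_on_rpoly_eval: "continuous_on UNIV (rpoly_eval f)"
  unfolding rpoly_eval_def by (intro continuous_intros)

lemma closed_basic_semialg: "closed (basic_semialg hs gs)"
proof -
  have "basic_semialg hs gs
      = (\<Inter>h\<in>set hs. {x. rpoly_eval h x = 0}) \<inter> (\<Inter>g\<in>set gs. {x. 0 \<le> rpoly_eval g x})"
    unfolding basic_semialg_def by auto
  moreover have "closed {x. rpoly_eval h x = 0}" for h :: "'a rpoly"
    by (rule closed_Collect_eq[OF continuous_on_rpoly_eval continuous_on_const])
  moreover have "closed {x. 0 \<le> rpoly_eval g x}" for g :: "'a rpoly"
    by (rule closed_Collect_le[OF continuous_on_const continuous_on_rpoly_eval])
  ultimately show ?thesis by (auto intro!: closed_INT closed_Int)
qed

lemma scaleR_Pair_one_mem_U_open_tilde: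
  assumes "x \<in> basic_semialg hs gs" "t > 0"
  shows "t *\<^sub>R (1, x) \<in> U_open_tilde hs gs"
proof -
  have "(1, x) \<in> U_open_tilde hs gs"
    using assms(1) unfolding U_open_tilde_def basic_semialg_def by (simp add: hom_eval_one)
  with assms(2) show ?thesis
    unfolding U_open_tilde_def by (simp del: scaleR_Pair add: hom_eval_scaleR)
qed

lemma uminus_mem_U_closed_tilde:
  assumes "xx \<in> U_closed_tilde hs gs" "fst xx = 0" "\<forall>g\<in>set gs. even (rpoly_deg g)"
  shows "- xx \<in> U_closed_tilde hs gs"
proof -
  have "hom_eval f (- xx) = (-1) ^ rpoly_deg f * hom_eval f xx" for f :: "'a rpoly"
    using hom_eval_scaleR[of f "-1" xx] by simp
  with assms show ?thesis unfolding U_closed_tilde_def by auto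
qed

lemma unbounded_imp_direction_at_infinity:
  fixes S :: "'a::euclidean_space set" and C :: "(real \<times> 'a) set"
  assumes "\<not> bounded S" and cone: "\<And>x t. x \<in> S \<Longrightarrow> t > 0 \<Longrightarrow> t *\<^sub>R ((1::real), x) \<in> C"
  shows "\<exists>l\<in>closure C. norm l = 1 \<and> fst l = 0"
proof -
  have "\<forall>k::nat. \<exists>x\<in>S. real k \<le> norm x"
    using assms(1) unfolding bounded_iff by (meson not_le less_imp_le)
  then obtain x where xS: "\<And>k. x k \<in> S" and x_large: "\<And>k. real k \<le> norm (x k)" by metis
  define n where "n k = norm ((1::real), x k)" for k
  define y where "y k = inverse (n k) *\<^sub>R ((1::real), x k)" for k
  have n_pos: "n k > 0" for k by (simp add: n_def zero_prod_def)
  have y_sphere: "y k \<in> sphere 0 1" for k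
    using n_pos[of k] unfolding y_def n_def by (simp del: scaleR_Pair)
  obtain l r where l: "l \<in> sphere 0 1" and r: "strict_mono r" and lim: "(y \<circ> r) \<longlonglongrightarrow> l"
    using compact_imp_seq_compact[OF compact_sphere] y_sphere unfolding seq_compact_def by metis
  have "y k \<in> C" for k
    unfolding y_def using cone[OF xS] n_pos by simp
  then have "l \<in> closure C"
    unfolding closure_sequential using lim by (auto intro!: exI[of _ "y \<circ> r"])
  moreover have "fst l = 0"
  proof -
    have "real k \<le> n k" for k
      using x_large[of k] by (simp add: n_def norm_Pair real_le_rsqrt order_trans)
    then have "filterlim n at_top sequentially"
      by (auto intro: filterlim_at_top_mono[OF filterlim_real_sequentially])
    then have "(\<lambda>k. fst (y k)) \<longlonglongrightarrow> 0"
      unfolding y_def by (simp add: tendsto_inverse_0_at_top)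
    then have "(\<lambda>k. fst ((y \<circ> r) k)) \<longlonglongrightarrow> 0"
      using LIMSEQ_subseq_LIMSEQ[OF _ r] by (simp add: comp_def)
    moreover have "(\<lambda>k. fst ((y \<circ> r) k)) \<longlonglongrightarrow> fst l"
      using lim by (intro tendsto_intros)
    ultimately show ?thesis using LIMSEQ_unique by blast
  qed
  ultimately show ?thesis using l by auto
qed

lemma pointedD: "pointed K \<Longrightarrow> x \<in> K \<Longrightarrow> - x \<in> K \<Longrightarrow> x = 0"
  unfolding pointed_def by (metis IntI image_eqI minus_minus singletonD)

theorem mainTheorem14:
  fixes hs gs :: "'n::finite rpoly list"
  assumes "\<forall>g\<in>set gs. even (rpoly_deg g)"
    and "\<not> compact (basic_semialg hs gs)"
    and "closed (convex hull (closure (U_open_tilde hs gs)))"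
    and "pointed (convex hull (closure (U_open_tilde hs gs)))"
  shows "\<not> closed_at_infinity hs gs"
proof
  assume "closed_at_infinity hs gs"
  then have closure_eq: "closure (U_open_tilde hs gs) = U_closed_tilde hs gs"
    unfolding closed_at_infinity_def .
  have "\<not> bounded (basic_semialg hs gs)"
    using assms(2) closed_basic_semialg compact_eq_bounded_closed by blast
  then obtain l where l: "l \<in> closure (U_open_tilde hs gs)" "norm l = 1" "fst l = 0"
    using unbounded_imp_direction_at_infinity scaleR_Pair_one_mem_U_open_tilde by blast
  then have "- l \<in> closure (U_open_tilde hs gs)"
    using uminus_mem_U_closed_tilde[OF _ _ assms(1)] closure_eq by simp
  with l(1) have "l = 0"
    by (intro pointedD[OF assms(4)] hull_inc)
  with l(2) show False by simp
qed

end
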